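(* Let $X$ be a real Banach space, $K$ a compact Hausdorff space and $T\colon X\to C(K)$ a U-embedding. Let $F_T\colon K\to X^*$ be given by $\langle x,F_T(k)\rangle=(Tx)(k)$, let $A_0:=F_T^{-1}(\mathrm{Ext}\,B_{X^*})$, and let $G:=F_T|_{\overline{A_0}}$. Then the map $T_G\colon X\to C(\overline{A_0})$, $(T_Gx)(k)=\langle x,G(k)\rangle=(Tx)(k)$ for $k\in\overline{A_0}$, is a U-embedding.
   Context: $C(K)$ and $C(\overline{A_0})$ carry the sup norm; $\mathrm{Ext}\,B_{X^*}$ is the set of extreme points of the dual unit ball. A linear isometry $T\colon X\to Y$ is a U-embedding if every $x^*\in X^*$ has a unique $y^*\in Y^*$ with $T^*(y^* )=x^*$ and $\|y^*\|=\|x^*\|$. $A_0$ is called the U-core of $T$. *)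

theory Defs
  imports "HOL-Analysis.Analysis"
begin

text \<open>C(S) for a subset S of a topological space: continuous real functions on S
  (with the subspace topology), normalised to vanish off S.\<close>
definition cfun :: "'k::topological_space set \<Rightarrow> ('k \<Rightarrow> real) set" where
  "cfun S = {f. continuous_on S f \<and> (\<forall>k. k \<notin> S \<longrightarrow> f k = 0)}"

definition supn :: "'k set \<Rightarrow> ('k \<Rightarrow> real) \<Rightarrow> real" where
  "supn S f = (if S = {} then 0 else Sup ((\<lambda>k. \<bar>f k\<bar>) ` S))"

text \<open>Dual space C(S)^*: bounded linear functionals on C(S), normalised to vanish
  outside C(S) (so that equality of functionals is equality on C(S)).\<close>
definition cdual :: "'k::topological_space set \<Rightarrow> (('k \<Rightarrow> real) \<Rightarrow> real) set" where
  "cdual S = {phi.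
     (\<forall>f\<in>cfun S. \<forall>g\<in>cfun S. phi (\<lambda>k. f k + g k) = phi f + phi g) \<and>
     (\<forall>f\<in>cfun S. \<forall>c. phi (\<lambda>k. c * f k) = c * phi f) \<and>
     (\<exists>B. \<forall>f\<in>cfun S. \<bar>phi f\<bar> \<le> B * supn S f) \<and>
     (\<forall>f. f \<notin> cfun S \<longrightarrow> phi f = 0)}"

definition dnorm :: "'k::topological_space set \<Rightarrow> (('k \<Rightarrow> real) \<Rightarrow> real) \<Rightarrow> real" where
  "dnorm S phi = Sup {\<bar>phi f\<bar> | f. f \<in> cfun S \<and> supn S f \<le> 1}"

definition U_embedding :: "'k::topological_space set \<Rightarrow> ('a::real_normed_vector \<Rightarrow> 'k \<Rightarrow> real) \<Rightarrow> bool" where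
  "U_embedding S T \<longleftrightarrow>
     (\<forall>x. T x \<in> cfun S) \<and>
     (\<forall>x y k. T (x + y) k = T x k + T y k) \<and>
     (\<forall>c x k. T (c *\<^sub>R x) k = c * T x k) \<and>
     (\<forall>x. supn S (T x) = norm x) \<and>
     (\<forall>xs :: 'a \<Rightarrow>\<^sub>L real. \<exists>!phi. phi \<in> cdual S \<and> (\<forall>x. phi (T x) = blinfun_apply xs x) \<and> dnorm S phi = norm xs)"

end

theory Submission
  imports Defs
begin

(* Write F for F_T and let phi be a norm-preserving extension to C(K) of a functional x*.
   If norm (F k) = 1, a proper convex decomposition of F k in the dual unit ball lifts, by
   uniqueness of norm-preserving extensions, to one of the point evaluation at k, which is
   extreme in the dual ball of C(K); hence norm (F k) = 1 puts k into A0.  Since |T x| attains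
   its maximum at a point where norm F = 1, the restricted map T_G is again isometric.
   The heart of the proof is that phi is carried by the closure of A0: on the closed set where
   norm F <= 1 - r, an almost norming x0 satisfies |T x0| < 1 - r/2, so a large total variation
   of phi there would let phi exceed its norm on a function of sup norm 1; by compactness,
   finitely many such sets cover the region where a function vanishing on the closure of A0 is
   not small.  Finally, Tietze extension and restriction match the norm-preserving extensions
   for T_G with those for T, which transfers existence and uniqueness. *)

section \<open>Continuous functions on a compact space and their dual\<close>

lemma normal_space_compact_t2:
  assumes "compact (UNIV :: 'k::t2_space set)"
  shows "normal_space (euclidean :: 'k topology)"
proof (rule compact_Hausdorff_or_regular_imp_normal_space)
  show "compact_space (euclidean :: 'k topology)"
    using assms by (simp add: compact_space_def compactin_euclidean_iff)
  have "Hausdorff_space (euclidean :: 'k topology)"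
    unfolding Hausdorff_space_def disjnt_def using hausdorff by (metis open_openin)
  then show "Hausdorff_space (euclidean :: 'k topology) \<or> regular_space (euclidean :: 'k topology)" ..
qed

lemma Urysohn_compact_t2:
  fixes A B :: "'k::t2_space set"
  assumes "compact (UNIV :: 'k set)" "closed A" "closed B" "A \<inter> B = {}"
  obtains f :: "'k \<Rightarrow> real"
  where "continuous_on UNIV f" "\<forall>t. 0 \<le> f t \<and> f t \<le> 1" "\<forall>t\<in>A. f t = 1" "\<forall>t\<in>B. f t = 0"
proof -
  have "disjnt B A" using assms(4) by (auto simp: disjnt_def)
  then obtain f where f: "continuous_map euclidean (top_of_set {0..1::real}) f"
      "f ` B \<subseteq> {0}" "f ` A \<subseteq> {1}"
    using Urysohn_lemma[OF normal_space_compact_t2[OF assms(1)], of B A 0 1] assms(2,3) by auto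
  then have "continuous_on UNIV f" "\<forall>t. 0 \<le> f t \<and> f t \<le> 1"
    unfolding continuous_map_in_subtopology by auto
  then show ?thesis using that f(2,3) by blast
qed

lemma Tietze_compact_t2:
  fixes S :: "'k::t2_space set" and f :: "'k \<Rightarrow> real"
  assumes "compact (UNIV :: 'k set)" "closed S" "continuous_on S f"
    and "0 \<le> B" "\<And>t. t \<in> S \<Longrightarrow> \<bar>f t\<bar> \<le> B"
  obtains g where "continuous_on UNIV g" "\<And>t. t \<in> S \<Longrightarrow> g t = f t" "\<And>t. \<bar>g t\<bar> \<le> B"
proof -
  have "closedin euclidean S" "continuous_map (subtopology euclidean S) euclideanreal f"
    using assms(2,3) by simp_all
  moreover have "f ` S \<subseteq> {-B..B}" using assms(5) by (force simp: abs_le_iff)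
  moreover have "-B \<le> B" using assms(4) by simp
  ultimately obtain g where g: "continuous_map euclidean euclideanreal g"
      "\<And>x. x \<in> S \<Longrightarrow> g x = f x" "g ` topspace euclidean \<subseteq> {-B..B}"
    using Tietze_extension_closed_real_interval[OF normal_space_compact_t2[OF assms(1)]] by metis
  have "\<bar>g t\<bar> \<le> B" for t
    using g(3) unfolding abs_le_iff image_subset_iff
    by (metis UNIV_I atLeastAtMost_iff minus_le_iff topspace_euclidean)
  then show ?thesis using that[of g] g(1,2) by simp
qed

lemma cfunD: "f \<in> cfun S \<Longrightarrow> continuous_on S f" "f \<in> cfun S \<Longrightarrow> k \<notin> S \<Longrightarrow> f k = 0"
  by (auto simp: cfun_def)

lemma cfun_UNIV: "cfun UNIV = {f. continuous_on UNIV f}"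
  by (auto simp: cfun_def)

lemma cfun_add: "f \<in> cfun S \<Longrightarrow> g \<in> cfun S \<Longrightarrow> (\<lambda>t. f t + g t) \<in> cfun S"
  by (auto simp: cfun_def intro!: continuous_intros)

lemma cfun_scale: "f \<in> cfun S \<Longrightarrow> (\<lambda>t. c * f t) \<in> cfun S"
  by (simp add: cfun_def continuous_on_mult_left)

lemma cfun_diff: "f \<in> cfun S \<Longrightarrow> g \<in> cfun S \<Longrightarrow> (\<lambda>t. f t - g t) \<in> cfun S"
  by (auto simp: cfun_def intro!: continuous_intros)

lemma cfun_zero: "(\<lambda>t. 0) \<in> cfun S"
  by (auto simp: cfun_def)

lemma cfun_const_UNIV: "(\<lambda>t. c) \<in> cfun UNIV"
  by (simp add: cfun_UNIV)

lemma bdd_above_abs_image: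
  fixes f :: "'k::topological_space \<Rightarrow> real"
  assumes "compact S" "continuous_on S f"
  shows "bdd_above ((\<lambda>k. \<bar>f k\<bar>) ` S)"
  using assms by (intro bounded_imp_bdd_above compact_imp_bounded compact_continuous_image
      continuous_on_rabs)

lemma abs_le_supn: "compact S \<Longrightarrow> continuous_on S f \<Longrightarrow> t \<in> S \<Longrightarrow> \<bar>f t\<bar> \<le> supn S f"
  unfolding supn_def by (auto intro!: cSup_upper bdd_above_abs_image)

lemma supn_nonneg:
  assumes "compact S" "continuous_on S f"
  shows "0 \<le> supn S f"
proof (cases "S = {}")
  case False
  then obtain t where "t \<in> S" by blast
  then show ?thesis using abs_le_supn[OF assms] by (meson abs_ge_zero order_trans)
qed (simp add: supn_def)

lemma supn_le: "0 \<le> B \<Longrightarrow> (\<And>t. t \<in> S \<Longrightarrow> \<bar>f t\<bar> \<le> B) \<Longrightarrow> supn S f \<le> B"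
  unfolding supn_def by (auto intro!: cSup_least)

lemma supn_const_1:
  assumes "compact (UNIV :: 'k::topological_space set)"
  shows "supn (UNIV :: 'k set) (\<lambda>t. 1) = 1"
  using abs_le_supn[OF assms, of "\<lambda>t. 1" undefined] supn_le[of 1 "UNIV :: 'k set" "\<lambda>t. 1"]
  by simp

lemma supn_attained:
  assumes "compact S" "S \<noteq> {}" "continuous_on S f"
  obtains t where "t \<in> S" "\<bar>f t\<bar> = supn S f"
proof -
  have "compact ((\<lambda>k. \<bar>f k\<bar>) ` S)"
    using assms by (intro compact_continuous_image continuous_on_rabs)
  then obtain t where "t \<in> S" "\<forall>s\<in>S. \<bar>f s\<bar> \<le> \<bar>f t\<bar>"
    using compact_attains_sup[of "(\<lambda>k. \<bar>f k\<bar>) ` S"] assms(2) by auto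
  then have "supn S f = \<bar>f t\<bar>"
    unfolding supn_def using assms(2) by (auto intro!: cSup_eq_maximum)
  then show ?thesis using that \<open>t \<in> S\<close> by simp
qed

lemma cfun_supn_eq_0:
  assumes "compact S" "f \<in> cfun S" "supn S f = 0"
  shows "f = (\<lambda>t. 0)"
proof
  fix t show "f t = 0"
    using abs_le_supn[OF assms(1) cfunD(1)[OF assms(2)], of t] assms(3) cfunD(2)[OF assms(2)]
    by (cases "t \<in> S") auto
qed

lemma cdual_add:
  "phi \<in> cdual S \<Longrightarrow> f \<in> cfun S \<Longrightarrow> g \<in> cfun S \<Longrightarrow> phi (\<lambda>t. f t + g t) = phi f + phi g"
  by (auto simp: cdual_def)

lemma cdual_scale: "phi \<in> cdual S \<Longrightarrow> f \<in> cfun S \<Longrightarrow> phi (\<lambda>t. c * f t) = c * phi f"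
  by (auto simp: cdual_def)

lemma cdual_outside: "phi \<in> cdual S \<Longrightarrow> f \<notin> cfun S \<Longrightarrow> phi f = 0"
  by (auto simp: cdual_def)

lemma cdual_zero: "phi \<in> cdual S \<Longrightarrow> phi (\<lambda>t. 0) = 0"
  using cdual_scale[OF _ cfun_zero, of phi S 0] by simp

lemma cdual_diff:
  "phi \<in> cdual S \<Longrightarrow> f \<in> cfun S \<Longrightarrow> g \<in> cfun S \<Longrightarrow> phi (\<lambda>t. f t - g t) = phi f - phi g"
  using cdual_add[of phi S f "\<lambda>t. -1 * g t"] cdual_scale[of phi S g "-1"] cfun_scale[of g S "-1"]
  by simp

lemma cdual_bdd_above:
  assumes "phi \<in> cdual S" "compact S"
  shows "bdd_above {\<bar>phi f\<bar> | f. f \<in> cfun S \<and> supn S f \<le> 1}"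
proof -
  obtain B where B: "\<forall>f\<in>cfun S. \<bar>phi f\<bar> \<le> B * supn S f" using assms(1) by (auto simp: cdual_def)
  have "\<bar>phi f\<bar> \<le> \<bar>B\<bar>" if "f \<in> cfun S" "supn S f \<le> 1" for f
  proof -
    have "B * supn S f \<le> \<bar>B\<bar> * 1"
      using that supn_nonneg[OF assms(2) cfunD(1)[OF that(1)]]
      by (metis abs_ge_self abs_ge_zero mult_mono)
    then show ?thesis using B that(1) by force
  qed
  then show ?thesis by (auto intro!: bdd_aboveI)
qed

lemma dnorm_nonneg:
  assumes "phi \<in> cdual S" "compact S"
  shows "0 \<le> dnorm S phi"
proof -
  have "\<bar>phi (\<lambda>t. 0)\<bar> \<le> dnorm S phi"
    unfolding dnorm_def
    by (rule cSup_upper[OF _ cdual_bdd_above[OF assms]]) (auto intro!: cfun_zero supn_le)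
  then show ?thesis by simp
qed

lemma abs_cdual_le:
  assumes "phi \<in> cdual S" "compact S" "f \<in> cfun S"
  shows "\<bar>phi f\<bar> \<le> dnorm S phi * supn S f"
proof (cases "supn S f = 0")
  case True
  then show ?thesis using cfun_supn_eq_0[OF assms(2,3)] cdual_zero[OF assms(1)] by simp
next
  case False
  define M where "M = supn S f"
  have M: "0 < M" using False supn_nonneg[OF assms(2) cfunD(1)[OF assms(3)]] M_def by simp
  have g: "(\<lambda>t. (1/M) * f t) \<in> cfun S" by (intro cfun_scale assms)
  have "supn S (\<lambda>t. (1/M) * f t) \<le> 1"
    using abs_le_supn[OF assms(2) cfunD(1)[OF assms(3)]] M
    by (intro supn_le) (auto simp: M_def abs_mult)
  then have "\<bar>phi (\<lambda>t. (1/M) * f t)\<bar> \<le> dnorm S phi"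
    unfolding dnorm_def using g by (intro cSup_upper[OF _ cdual_bdd_above[OF assms(1,2)]]) auto
  moreover have "phi (\<lambda>t. (1/M) * f t) = (1/M) * phi f" by (rule cdual_scale[OF assms(1,3)])
  ultimately have "\<bar>phi f\<bar> / M \<le> dnorm S phi"
    using M by (simp add: abs_mult)
  then show ?thesis using M by (simp add: M_def divide_le_eq mult.commute)
qed

lemma dnorm_le:
  assumes "compact S" "0 \<le> B" "\<And>f. f \<in> cfun S \<Longrightarrow> \<bar>phi f\<bar> \<le> B * supn S f"
  shows "dnorm S phi \<le> B"
  unfolding dnorm_def
proof (rule cSup_least)
  show "{\<bar>phi f\<bar> |f. f \<in> cfun S \<and> supn S f \<le> 1} \<noteq> {}"
    using cfun_zero[of S] supn_le[of 1 S "\<lambda>t. 0"] by auto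
  show "y \<le> B" if "y \<in> {\<bar>phi f\<bar> |f. f \<in> cfun S \<and> supn S f \<le> 1}" for y
    using that assms(2,3) by (force intro: order_trans[OF _ mult_left_le])
qed

lemma cdualI:
  assumes "compact S" "0 \<le> B"
    and "\<And>f g. f \<in> cfun S \<Longrightarrow> g \<in> cfun S \<Longrightarrow> phi (\<lambda>t. f t + g t) = phi f + phi g"
    and "\<And>f c. f \<in> cfun S \<Longrightarrow> phi (\<lambda>t. c * f t) = c * phi f"
    and "\<And>f. f \<in> cfun S \<Longrightarrow> \<bar>phi f\<bar> \<le> B * supn S f"
    and "\<And>f. f \<notin> cfun S \<Longrightarrow> phi f = 0"
  shows "phi \<in> cdual S" "dnorm S phi \<le> B"
  using assms by (auto simp: cdual_def intro: dnorm_le) blast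

lemma exists_almost_norming:
  fixes xs :: "'a::real_normed_vector \<Rightarrow>\<^sub>L real"
  assumes "0 < d"
  obtains x where "norm x \<le> 1" "norm xs - d < blinfun_apply xs x"
proof -
  have "norm xs \<le> norm xs - d" if H: "\<And>x. norm x \<le> 1 \<Longrightarrow> blinfun_apply xs x \<le> norm xs - d"
  proof (rule norm_blinfun_bound)
    show "0 \<le> norm xs - d" using H[of 0] by simp
    show "norm (blinfun_apply xs x) \<le> (norm xs - d) * norm x" for x
    proof (cases "x = 0")
      case False
      define y where "y = (1 / norm x) *\<^sub>R x"
      have "norm y \<le> 1" "norm (- y) \<le> 1" using False by (auto simp: y_def)
      moreover have "blinfun_apply xs y = blinfun_apply xs x / norm x"
        "blinfun_apply xs (- y) = - (blinfun_apply xs x / norm x)"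
        by (simp_all add: y_def blinfun.scaleR_right blinfun.minus_right)
      ultimately have "\<bar>blinfun_apply xs x / norm x\<bar> \<le> norm xs - d"
        using H by (metis abs_le_iff)
      then show ?thesis using False by (simp add: divide_le_eq mult.commute)
    qed simp
  qed
  then show ?thesis using that assms by force
qed

definition norm_preserving_ext ::
  "'k::topological_space set \<Rightarrow> ('a::real_normed_vector \<Rightarrow> 'k \<Rightarrow> real) \<Rightarrow> ('a \<Rightarrow>\<^sub>L real)
     \<Rightarrow> (('k \<Rightarrow> real) \<Rightarrow> real) \<Rightarrow> bool" where
  "norm_preserving_ext S T xs phi \<longleftrightarrow>
     phi \<in> cdual S \<and> (\<forall>x. phi (T x) = blinfun_apply xs x) \<and> dnorm S phi = norm xs"

lemma U_embedding_iff:
  "U_embedding S T \<longleftrightarrow>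
     (\<forall>x. T x \<in> cfun S) \<and> (\<forall>x y k. T (x + y) k = T x k + T y k) \<and>
     (\<forall>c x k. T (c *\<^sub>R x) k = c * T x k) \<and> (\<forall>x. supn S (T x) = norm x) \<and>
     (\<forall>xs. \<exists>!phi. norm_preserving_ext S T xs phi)"
  by (simp add: U_embedding_def norm_preserving_ext_def)

lemma norm_le_dnorm_if_extends:
  assumes "phi \<in> cdual S" "compact S" "\<And>x. T x \<in> cfun S" "\<And>x. supn S (T x) = norm x"
    and "\<And>x. phi (T x) = blinfun_apply xs x"
  shows "norm xs \<le> dnorm S phi"
proof (rule norm_blinfun_bound)
  show "0 \<le> dnorm S phi" by (rule dnorm_nonneg[OF assms(1,2)])
  show "norm (blinfun_apply xs x) \<le> dnorm S phi * norm x" for x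
    using abs_cdual_le[OF assms(1,2,3)] assms(4,5) by (metis real_norm_def)
qed

lemma norm_preserving_extI:
  assumes "phi \<in> cdual S" "compact S" "\<And>x. T x \<in> cfun S" "\<And>x. supn S (T x) = norm x"
    and "\<And>x. phi (T x) = blinfun_apply xs x" "dnorm S phi \<le> norm xs"
  shows "norm_preserving_ext S T xs phi"
  using assms norm_le_dnorm_if_extends[OF assms(1-5)]
  by (simp add: norm_preserving_ext_def)

lemma cdual_convex_combination:
  assumes "compact S" "pa \<in> cdual S" "pb \<in> cdual S" "0 \<le> u" "u \<le> 1"
  shows "(\<lambda>f. (1 - u) * pa f + u * pb f) \<in> cdual S"
    "dnorm S (\<lambda>f. (1 - u) * pa f + u * pb f) \<le> (1 - u) * dnorm S pa + u * dnorm S pb"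
proof -
  have bound: "\<bar>(1 - u) * pa f + u * pb f\<bar> \<le> ((1 - u) * dnorm S pa + u * dnorm S pb) * supn S f"
    if "f \<in> cfun S" for f
  proof -
    have "\<bar>(1 - u) * pa f + u * pb f\<bar> \<le> (1 - u) * \<bar>pa f\<bar> + u * \<bar>pb f\<bar>"
      using assms(4,5) abs_triangle_ineq[of "(1 - u) * pa f" "u * pb f"] by (simp add: abs_mult)
    also have "\<dots> \<le> (1 - u) * (dnorm S pa * supn S f) + u * (dnorm S pb * supn S f)"
      using abs_cdual_le[OF assms(2,1) that] abs_cdual_le[OF assms(3,1) that] assms(4,5)
      by (intro add_mono mult_left_mono) auto
    finally show ?thesis by (simp add: algebra_simps)
  qed
  have "0 \<le> (1 - u) * dnorm S pa + u * dnorm S pb"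
    using dnorm_nonneg[OF assms(2,1)] dnorm_nonneg[OF assms(3,1)] assms(4,5) by simp
  from cdualI[OF assms(1) this _ _ bound]
  show "(\<lambda>f. (1 - u) * pa f + u * pb f) \<in> cdual S"
    "dnorm S (\<lambda>f. (1 - u) * pa f + u * pb f) \<le> (1 - u) * dnorm S pa + u * dnorm S pb"
    using assms(2,3)
    by (auto simp: cdual_add cdual_scale cdual_outside algebra_simps)
qed

definition point_eval :: "'k::topological_space \<Rightarrow> ('k \<Rightarrow> real) \<Rightarrow> real" where
  "point_eval k f = (if f \<in> cfun UNIV then f k else 0)"

lemma point_eval_cdual:
  assumes "compact (UNIV :: 'k::topological_space set)"
  shows "point_eval (k :: 'k) \<in> cdual UNIV" "dnorm UNIV (point_eval k) \<le> 1"
proof -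
  have "\<bar>point_eval k f\<bar> \<le> 1 * supn UNIV f" if "f \<in> cfun UNIV" for f
    using abs_le_supn[OF assms cfunD(1)[OF that]] that by (simp add: point_eval_def)
  note cdual = cdualI[OF assms zero_le_one _ _ this]
  show "point_eval k \<in> cdual UNIV" by (rule cdual(1)) (simp_all add: point_eval_def cfun_add cfun_scale)
  show "dnorm UNIV (point_eval k) \<le> 1" by (rule cdual(2)) (simp_all add: point_eval_def cfun_add cfun_scale)
qed

lemma cdual_nonneg_if_unital:
  assumes cK: "compact (UNIV :: 'k::topological_space set)"
    and p: "p \<in> cdual UNIV" "dnorm UNIV p \<le> 1" "p (\<lambda>t. 1) = 1"
    and g: "g \<in> cfun UNIV" "\<And>t. 0 \<le> (g :: 'k \<Rightarrow> real) t"
  shows "0 \<le> p g"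
proof (cases "supn UNIV g = 0")
  case True
  then show ?thesis using cfun_supn_eq_0[OF cK g(1)] cdual_zero[OF p(1)] by simp
next
  case False
  define M where "M = supn UNIV g"
  have M: "0 < M" using False supn_nonneg[OF cK cfunD(1)[OF g(1)]] by (simp add: M_def)
  have gM: "g t \<le> M" for t using abs_le_supn[OF cK cfunD(1)[OF g(1)], of t] by (simp add: M_def)
  define h where "h = (\<lambda>t. 1 - (1/M) * g t)"
  have h: "h \<in> cfun UNIV" unfolding h_def by (intro cfun_diff cfun_const_UNIV cfun_scale g(1))
  have "\<bar>h t\<bar> \<le> 1" for t using gM[of t] g(2)[of t] M by (simp add: h_def field_simps)
  then have "supn UNIV h \<le> 1" by (intro supn_le) auto
  then have "dnorm UNIV p * supn UNIV h \<le> 1"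
    using p(2) supn_nonneg[OF cK cfunD(1)[OF h]] by (intro mult_le_one) auto
  then have "\<bar>p h\<bar> \<le> 1" using abs_cdual_le[OF p(1) cK h] by simp
  moreover have "p h = p (\<lambda>t. 1) - p (\<lambda>t. (1/M) * g t)"
    unfolding h_def by (rule cdual_diff[OF p(1) cfun_const_UNIV cfun_scale[OF g(1)]])
  then have "p h = 1 - (1/M) * p g" by (simp only: p(3) cdual_scale[OF p(1) g(1)])
  ultimately have "0 \<le> p g / M" by (simp add: abs_le_iff)
  then show ?thesis using M by (simp add: zero_le_divide_iff)
qed

lemma point_eval_extreme_in_dual_ball:
  fixes pa pb :: "('k::topological_space \<Rightarrow> real) \<Rightarrow> real"
  assumes cK: "compact (UNIV :: 'k set)"
    and pa: "pa \<in> cdual UNIV" "dnorm UNIV pa \<le> 1"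
    and pb: "pb \<in> cdual UNIV" "dnorm UNIV pb \<le> 1"
    and u: "0 < u" "u < 1"
    and comb: "\<And>f. f \<in> cfun UNIV \<Longrightarrow> (1 - u) * pa f + u * pb f = f k"
    and f: "f \<in> cfun UNIV"
  shows "pa f = f k"
proof -
  have le1: "p (\<lambda>t. 1) \<le> 1" if "p \<in> cdual UNIV" "dnorm UNIV p \<le> 1" for p :: "('k \<Rightarrow> real) \<Rightarrow> real"
    using abs_cdual_le[OF that(1) cK cfun_const_UNIV, of 1] supn_const_1[OF cK] that(2) by simp
  have "(1 - u) * (1 - pa (\<lambda>t. 1)) + u * (1 - pb (\<lambda>t. 1)) = 0"
    using comb[OF cfun_const_UNIV, of 1] by (simp add: algebra_simps)
  moreover have "0 \<le> (1 - u) * (1 - pa (\<lambda>t. 1))" "0 \<le> u * (1 - pb (\<lambda>t. 1))"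
    using le1[OF pa] le1[OF pb] u by simp_all
  ultimately have unital: "pa (\<lambda>t. 1) = 1" "pb (\<lambda>t. 1) = 1"
    using u by (simp_all add: add_nonneg_eq_0_iff)
  have vanish: "pa g = 0" if g: "g \<in> cfun UNIV" "\<And>t. 0 \<le> g t" "g k = 0" for g
  proof -
    have "0 \<le> pa g" "0 \<le> pb g"
      using cdual_nonneg_if_unital[OF cK pa unital(1) g(1,2)]
        cdual_nonneg_if_unital[OF cK pb unital(2) g(1,2)] by simp_all
    moreover have "(1 - u) * pa g + u * pb g = 0" using comb[OF g(1)] g(3) by simp
    ultimately have "(1 - u) * pa g = 0" using u by (simp add: add_nonneg_eq_0_iff)
    then show ?thesis using u by simp
  qed
  define P where "P = (\<lambda>t. max (f t - f k) 0)"
  define Q where "Q = (\<lambda>t. max (f k - f t) 0)"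
  have PQ: "P \<in> cfun UNIV" "Q \<in> cfun UNIV"
    using f unfolding P_def Q_def cfun_UNIV by (auto intro!: continuous_intros)
  have "pa (\<lambda>t. (f k * 1 + P t) - Q t) = pa (\<lambda>t. f k * 1 + P t) - pa Q"
    by (rule cdual_diff[OF pa(1) cfun_add[OF cfun_scale[OF cfun_const_UNIV] PQ(1)] PQ(2)])
  also have "\<dots> = f k * pa (\<lambda>t. 1) + pa P - pa Q"
    using cdual_add[OF pa(1) cfun_scale[OF cfun_const_UNIV[of 1], of "f k"] PQ(1)]
      cdual_scale[OF pa(1) cfun_const_UNIV[of 1], of "f k"] by simp
  also have "(\<lambda>t. (f k * 1 + P t) - Q t) = f" by (auto simp: P_def Q_def)
  moreover have "pa P = 0" "pa Q = 0" by (rule vanish; use PQ in \<open>auto simp: P_def Q_def\<close>)+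
  ultimately show ?thesis using unital by simp
qed

section \<open>Total variation of a functional\<close>

definition clamp :: "('k \<Rightarrow> real) \<Rightarrow> ('k \<Rightarrow> real) \<Rightarrow> 'k \<Rightarrow> real" where
  "clamp G g = (\<lambda>t. max (- G t) (min (G t) (g t)))"

lemma cfun_clamp: "G \<in> cfun UNIV \<Longrightarrow> g \<in> cfun UNIV \<Longrightarrow> clamp G g \<in> cfun UNIV"
  unfolding cfun_UNIV clamp_def by (auto intro!: continuous_intros)

lemma abs_clamp_le: "0 \<le> G t \<Longrightarrow> \<bar>clamp G g t\<bar> \<le> G t"
  by (auto simp: clamp_def)

lemma abs_diff_clamp: "0 \<le> G t \<Longrightarrow> \<bar>g t - clamp G g t\<bar> = max 0 (\<bar>g t\<bar> - G t)"
  by (auto simp: clamp_def abs_if max_def min_def)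

(* For f >= 0, variation phi f is the integral of f against the total variation |phi| of the
   measure phi. *)
definition variation :: "(('k::topological_space \<Rightarrow> real) \<Rightarrow> real) \<Rightarrow> ('k \<Rightarrow> real) \<Rightarrow> real" where
  "variation phi f = Sup {phi h | h. h \<in> cfun UNIV \<and> (\<forall>t. \<bar>h t\<bar> \<le> f t)}"

context
  fixes phi :: "('k::topological_space \<Rightarrow> real) \<Rightarrow> real"
  assumes cK: "compact (UNIV :: 'k set)" and phi: "phi \<in> cdual UNIV"
begin

lemma variation_bdd_above:
  assumes "f \<in> cfun UNIV"
  shows "bdd_above {phi h | h. h \<in> cfun UNIV \<and> (\<forall>t. \<bar>h t\<bar> \<le> f t)}"
proof (rule bdd_aboveI)
  fix y assume "y \<in> {phi h | h. h \<in> cfun UNIV \<and> (\<forall>t. \<bar>h t\<bar> \<le> f t)}"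
  then obtain h where h: "h \<in> cfun UNIV" "\<And>t. \<bar>h t\<bar> \<le> f t" "y = phi h" by auto
  have "\<bar>h t\<bar> \<le> supn UNIV f" for t
    using h(2)[of t] abs_le_supn[OF cK cfunD(1)[OF assms], of t] by simp
  then have "supn UNIV h \<le> supn UNIV f"
    using supn_nonneg[OF cK cfunD(1)[OF assms]] by (intro supn_le) auto
  then have "\<bar>phi h\<bar> \<le> dnorm UNIV phi * supn UNIV f"
    using abs_cdual_le[OF phi cK h(1)] dnorm_nonneg[OF phi cK] by (meson mult_left_mono order_trans)
  then show "y \<le> dnorm UNIV phi * supn UNIV f" using h(3) by linarith
qed

lemma abs_le_variation:
  assumes "f \<in> cfun UNIV" "h \<in> cfun UNIV" "\<And>t. \<bar>h t\<bar> \<le> f t"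
  shows "\<bar>phi h\<bar> \<le> variation phi f"
proof -
  have le: "phi g \<le> variation phi f" if "g \<in> cfun UNIV" "\<And>t. \<bar>g t\<bar> \<le> f t" for g
    unfolding variation_def using that by (intro cSup_upper[OF _ variation_bdd_above[OF assms(1)]]) auto
  have "phi (\<lambda>t. -1 * h t) \<le> variation phi f" using assms(3) by (intro le cfun_scale assms(2)) auto
  then show ?thesis using le[OF assms(2,3)] cdual_scale[OF phi assms(2), of "-1"] by simp
qed

lemma variation_le:
  assumes "\<And>t. 0 \<le> f t" "\<And>h. h \<in> cfun UNIV \<Longrightarrow> (\<And>t. \<bar>h t\<bar> \<le> f t) \<Longrightarrow> phi h \<le> c"
  shows "variation phi f \<le> c"
  unfolding variation_def
proof (rule cSup_least)
  show "{phi h | h. h \<in> cfun UNIV \<and> (\<forall>t. \<bar>h t\<bar> \<le> f t)} \<noteq> {}"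
    using assms(1) cfun_zero by fastforce
qed (use assms(2) in auto)

lemma variation_approx:
  assumes "f \<in> cfun UNIV" "\<And>t. 0 \<le> f t" "0 < d"
  obtains h where "h \<in> cfun UNIV" "\<And>t. \<bar>h t\<bar> \<le> f t" "variation phi f - d < phi h"
proof -
  have "{phi h | h. h \<in> cfun UNIV \<and> (\<forall>t. \<bar>h t\<bar> \<le> f t)} \<noteq> {}"
    using assms(2) cfun_zero by fastforce
  then have "\<exists>y\<in>{phi h | h. h \<in> cfun UNIV \<and> (\<forall>t. \<bar>h t\<bar> \<le> f t)}. variation phi f - d < y"
    using assms(3) unfolding variation_def
    by (subst less_cSup_iff[symmetric]) (auto intro: variation_bdd_above[OF assms(1)])
  then show ?thesis using that by auto
qed

lemma variation_scale_le:
  assumes "0 \<le> c" "f \<in> cfun UNIV" "\<And>t. 0 \<le> f t"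
  shows "variation phi (\<lambda>t. c * f t) \<le> c * variation phi f"
proof (rule variation_le)
  show "0 \<le> c * f t" for t using assms by simp
  fix h assume h: "h \<in> cfun UNIV" "\<And>t. \<bar>h t\<bar> \<le> c * f t"
  show "phi h \<le> c * variation phi f"
  proof (cases "c = 0")
    case True
    then have "h = (\<lambda>t. 0)" using h(2) by fastforce
    then show ?thesis using cdual_zero[OF phi] True by simp
  next
    case False
    then have c: "0 < c" using assms(1) by simp
    have "\<bar>(1/c) * h t\<bar> \<le> f t" for t using h(2)[of t] c by (simp add: abs_mult field_simps)
    then have "\<bar>phi (\<lambda>t. (1/c) * h t)\<bar> \<le> variation phi f"
      by (intro abs_le_variation assms(2) cfun_scale h(1))
    then have "phi h / c \<le> variation phi f"
      using cdual_scale[OF phi h(1), of "1/c"] c by (simp add: abs_le_iff)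
    then show ?thesis using c by (simp add: divide_le_eq mult.commute)
  qed
qed

lemma abs_le_sum_variation:
  assumes "finite I" "\<And>m. m \<in> I \<Longrightarrow> F m \<in> cfun UNIV" "\<And>m t. m \<in> I \<Longrightarrow> 0 \<le> F m t"
  shows "h \<in> cfun UNIV \<Longrightarrow> (\<And>t. \<bar>h t\<bar> \<le> (\<Sum>m\<in>I. F m t))
    \<Longrightarrow> \<bar>phi h\<bar> \<le> (\<Sum>m\<in>I. variation phi (F m))"
  using assms
proof (induction I arbitrary: h rule: finite_induct)
  case empty
  then have "h = (\<lambda>t. 0)" by fastforce
  then show ?case using cdual_zero[OF phi] by simp
next
  case (insert j I)
  define h1 where "h1 = clamp (F j) h"
  have h1: "h1 \<in> cfun UNIV" unfolding h1_def by (intro cfun_clamp insert.prems) simp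
  have h2: "(\<lambda>t. h t - h1 t) \<in> cfun UNIV" by (intro cfun_diff h1 insert.prems)
  have "\<bar>h t - h1 t\<bar> \<le> (\<Sum>m\<in>I. F m t)" for t
    using insert.prems(2)[of t] insert.prems(4)[of j t] insert.hyps sum_nonneg[of I "\<lambda>m. F m t"]
      insert.prems(4) abs_diff_clamp[of "F j" t h]
    by (simp add: h1_def)
  then have "\<bar>phi (\<lambda>t. h t - h1 t)\<bar> \<le> (\<Sum>m\<in>I. variation phi (F m))"
    using insert.prems by (intro insert.IH h2) auto
  moreover have "\<bar>phi h1\<bar> \<le> variation phi (F j)"
    unfolding h1_def using insert.prems(4) by (intro abs_le_variation abs_clamp_le h1[unfolded h1_def] insert.prems(3)) auto
  moreover have "phi h = phi h1 + phi (\<lambda>t. h t - h1 t)"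
    using cdual_add[OF phi h1 h2] by simp
  ultimately show ?case using insert.hyps by simp
qed

end

lemma sum_power_half_le: "finite I \<Longrightarrow> (\<Sum>m\<in>I. (1/2::real) ^ m) \<le> 2"
  using sum_le_suminf[OF summable_geometric[of "1/2 :: real"], of I] by (simp add: suminf_geometric)

lemma abs_le_sum_variation_cover:
  fixes phi :: "('k::topological_space \<Rightarrow> real) \<Rightarrow> real"
  assumes cK: "compact (UNIV :: 'k set)" and phi: "phi \<in> cdual UNIV" and g: "g \<in> cfun UNIV"
    and I: "finite I" "\<And>m. m \<in> I \<Longrightarrow> F m \<in> cfun UNIV" "\<And>m t. m \<in> I \<Longrightarrow> 0 \<le> F m t"
    and cover: "\<And>t. e \<le> \<bar>g t\<bar> \<Longrightarrow> \<exists>m\<in>I. 1/2 < F m t" and "0 \<le> e"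
  shows "\<bar>phi g\<bar> \<le> (\<Sum>m\<in>I. variation phi (\<lambda>t. 2 * supn UNIV g * F m t)) + dnorm UNIV phi * e"
proof -
  define M where "M = supn UNIV g"
  have M: "0 \<le> M" "\<And>t. \<bar>g t\<bar> \<le> M"
    using supn_nonneg[OF cK cfunD(1)[OF g]] abs_le_supn[OF cK cfunD(1)[OF g]] by (auto simp: M_def)
  define G where "G = (\<lambda>t. \<Sum>m\<in>I. 2 * M * F m t)"
  have G: "G \<in> cfun UNIV" "\<And>t. 0 \<le> G t"
    using I M(1) unfolding G_def cfun_UNIV by (auto intro!: continuous_intros sum_nonneg)
  (* where |g| >= e the cover makes G exceed M, so clamping at G only changes g where |g| < e *)
  have small: "\<bar>g t - clamp G g t\<bar> \<le> e" for t
  proof (cases "e \<le> \<bar>g t\<bar>")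
    case True
    then obtain m where m: "m \<in> I" "1/2 < F m t" using cover by blast
    have "M \<le> 2 * M * F m t" using m(2) M(1) by (simp add: mult_left_mono[of "1/2" "F m t" "2 * M", simplified])
    also have "\<dots> \<le> G t" unfolding G_def using I M(1) m(1) by (intro member_le_sum) auto
    finally show ?thesis using M(2)[of t] abs_diff_clamp[of G t g, OF G(2)] \<open>0 \<le> e\<close> by simp
  qed (use abs_diff_clamp[of G t g, OF G(2)] G(2)[of t] in auto)
  have "phi g = phi (clamp G g) + phi (\<lambda>t. g t - clamp G g t)"
    using cdual_add[OF phi cfun_clamp[OF G(1) g] cfun_diff[OF g cfun_clamp[OF G(1) g]]] by simp
  moreover have "\<bar>phi (clamp G g)\<bar> \<le> (\<Sum>m\<in>I. variation phi (\<lambda>t. 2 * M * F m t))"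
    using I M(1) abs_clamp_le[of G, OF G(2)]
    by (intro abs_le_sum_variation[OF cK phi] cfun_clamp G(1) g cfun_scale) (auto simp: G_def)
  moreover have "\<bar>phi (\<lambda>t. g t - clamp G g t)\<bar> \<le> dnorm UNIV phi * e"
    using abs_cdual_le[OF phi cK cfun_diff[OF g cfun_clamp[OF G(1) g]]] dnorm_nonneg[OF phi cK]
      supn_le[of e UNIV "\<lambda>t. g t - clamp G g t", OF \<open>0 \<le> e\<close> small]
    by (meson mult_left_mono order_trans)
  ultimately show ?thesis unfolding M_def by linarith
qed

section \<open>Restriction to a closed subset\<close>

definition restrict_zero :: "'k set \<Rightarrow> ('k \<Rightarrow> real) \<Rightarrow> 'k \<Rightarrow> real" where
  "restrict_zero S f = (\<lambda>t. if t \<in> S then f t else 0)"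

lemma cfun_restrict_zero: "f \<in> cfun UNIV \<Longrightarrow> restrict_zero S f \<in> cfun S"
  unfolding cfun_def restrict_zero_def
  by (auto intro: continuous_on_cong[THEN iffD1, OF refl _ continuous_on_subset])

lemma supn_restrict_zero_le:
  assumes "compact (UNIV :: 'k::topological_space set)" "f \<in> cfun (UNIV :: 'k set)"
  shows "supn S (restrict_zero S f) \<le> supn UNIV f"
  using abs_le_supn[OF assms(1) cfunD(1)[OF assms(2)]] supn_nonneg[OF assms(1) cfunD(1)[OF assms(2)]]
  by (intro supn_le) (auto simp: restrict_zero_def)

lemma compact_closed_in_compact_UNIV:
  "compact (UNIV :: 'k::t2_space set) \<Longrightarrow> closed (S :: 'k set) \<Longrightarrow> compact S"
  using compact_Int_closed[of UNIV S] by simp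

definition pullback :: "'k set \<Rightarrow> (('k \<Rightarrow> real) \<Rightarrow> real) \<Rightarrow> ('k::topological_space \<Rightarrow> real) \<Rightarrow> real" where
  "pullback S psi f = (if f \<in> cfun UNIV then psi (restrict_zero S f) else 0)"

lemma pullback_cdual:
  assumes cK: "compact (UNIV :: 'k::topological_space set)" and "compact (S :: 'k set)"
    and psi: "psi \<in> cdual S"
  shows "pullback S psi \<in> cdual UNIV" "dnorm UNIV (pullback S psi) \<le> dnorm S psi"
proof -
  have bound: "\<bar>pullback S psi f\<bar> \<le> dnorm S psi * supn UNIV f" if f: "f \<in> cfun UNIV" for f
    using abs_cdual_le[OF psi assms(2) cfun_restrict_zero[OF f]] supn_restrict_zero_le[OF cK f]
      dnorm_nonneg[OF psi assms(2)] f
    by (simp add: pullback_def) (meson mult_left_mono order_trans)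
  note cdual = cdualI[OF cK dnorm_nonneg[OF psi assms(2)] _ _ bound]
  have restrict_lin: "restrict_zero S (\<lambda>t. f t + g t) = (\<lambda>t. restrict_zero S f t + restrict_zero S g t)"
    "restrict_zero S (\<lambda>t. c * f t) = (\<lambda>t. c * restrict_zero S f t)" for f g and c :: real
    by (auto simp: restrict_zero_def)
  show "pullback S psi \<in> cdual UNIV" "dnorm UNIV (pullback S psi) \<le> dnorm S psi"
    by (rule cdual; simp add: pullback_def restrict_lin cfun_add cfun_scale cfun_restrict_zero
        cdual_add[OF psi] cdual_scale[OF psi])+
qed

definition tietze_ext :: "'k::topological_space set \<Rightarrow> ('k \<Rightarrow> real) \<Rightarrow> 'k \<Rightarrow> real" where
  "tietze_ext S f = (SOME g. g \<in> cfun UNIV \<and> restrict_zero S g = f \<and> supn UNIV g \<le> supn S f)"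

lemma tietze_ext:
  assumes cK: "compact (UNIV :: 'k::t2_space set)" and "closed S" and f: "f \<in> cfun (S :: 'k set)"
  shows "tietze_ext S f \<in> cfun UNIV" "restrict_zero S (tietze_ext S f) = f"
    "supn UNIV (tietze_ext S f) \<le> supn S f"
proof -
  have cS: "compact S" by (rule compact_closed_in_compact_UNIV[OF cK assms(2)])
  obtain g where g: "continuous_on UNIV g" "\<And>t. t \<in> S \<Longrightarrow> g t = f t" "\<And>t. \<bar>g t\<bar> \<le> supn S f"
    using Tietze_compact_t2[OF cK assms(2) cfunD(1)[OF f] supn_nonneg[OF cS cfunD(1)[OF f]]]
      abs_le_supn[OF cS cfunD(1)[OF f]] by metis
  have "g \<in> cfun UNIV \<and> restrict_zero S g = f \<and> supn UNIV g \<le> supn S f"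
    using g cfunD(2)[OF f] supn_nonneg[OF cS cfunD(1)[OF f]]
    by (auto simp: cfun_UNIV restrict_zero_def intro!: supn_le)
  then have "tietze_ext S f \<in> cfun UNIV \<and> restrict_zero S (tietze_ext S f) = f \<and>
      supn UNIV (tietze_ext S f) \<le> supn S f"
    unfolding tietze_ext_def
    by (rule someI[of "\<lambda>g. g \<in> cfun UNIV \<and> restrict_zero S g = f \<and> supn UNIV g \<le> supn S f"])
  then show "tietze_ext S f \<in> cfun UNIV" "restrict_zero S (tietze_ext S f) = f"
    "supn UNIV (tietze_ext S f) \<le> supn S f" by simp_all
qed

lemma tietze_ext_eq:
  assumes "compact (UNIV :: 'k::t2_space set)" "closed S" "f \<in> cfun (S :: 'k set)" "t \<in> S"
  shows "tietze_ext S f t = f t"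
  using fun_cong[OF tietze_ext(2)[OF assms(1-3)], of t] assms(4) by (simp add: restrict_zero_def)

definition pushforward :: "'k set \<Rightarrow> (('k \<Rightarrow> real) \<Rightarrow> real) \<Rightarrow> ('k::topological_space \<Rightarrow> real) \<Rightarrow> real" where
  "pushforward S phi f = (if f \<in> cfun S then phi (tietze_ext S f) else 0)"

lemma pushforward_cdual:
  assumes cK: "compact (UNIV :: 'k::t2_space set)" and "closed (S :: 'k set)"
    and phi: "phi \<in> cdual UNIV"
    and supported: "\<forall>g\<in>cfun UNIV. (\<forall>t\<in>S. g t = 0) \<longrightarrow> phi g = 0"
  shows "pushforward S phi \<in> cdual S" "dnorm S (pushforward S phi) \<le> dnorm UNIV phi"
    and "\<And>f. f \<in> cfun UNIV \<Longrightarrow> pushforward S phi (restrict_zero S f) = phi f"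
proof -
  have agree: "phi u = phi v" if "u \<in> cfun UNIV" "v \<in> cfun UNIV" "\<And>t. t \<in> S \<Longrightarrow> u t = v t" for u v
  proof -
    have "phi (\<lambda>t. u t - v t) = 0" using that supported cfun_diff[OF that(1,2)] by simp
    then show ?thesis using cdual_diff[OF phi that(1,2)] by simp
  qed
  note ext = tietze_ext[OF cK assms(2)] and ext_eq = tietze_ext_eq[OF cK assms(2)]
  have bound: "\<bar>pushforward S phi f\<bar> \<le> dnorm UNIV phi * supn S f" if f: "f \<in> cfun S" for f
  proof -
    have "\<bar>phi (tietze_ext S f)\<bar> \<le> dnorm UNIV phi * supn UNIV (tietze_ext S f)"
      by (rule abs_cdual_le[OF phi cK ext(1)[OF f]])
    also have "\<dots> \<le> dnorm UNIV phi * supn S f"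
      by (rule mult_left_mono[OF ext(3)[OF f] dnorm_nonneg[OF phi cK]])
    finally show ?thesis using f by (simp add: pushforward_def)
  qed
  have add: "pushforward S phi (\<lambda>t. f t + g t) = pushforward S phi f + pushforward S phi g"
    if "f \<in> cfun S" "g \<in> cfun S" for f g
  proof -
    have "phi (tietze_ext S (\<lambda>t. f t + g t)) = phi (\<lambda>t. tietze_ext S f t + tietze_ext S g t)"
      using that by (intro agree cfun_add ext(1)) (simp_all add: ext_eq cfun_add)
    then show ?thesis
      using that cdual_add[OF phi ext(1) ext(1)] by (simp add: pushforward_def cfun_add)
  qed
  have scale: "pushforward S phi (\<lambda>t. c * f t) = c * pushforward S phi f" if "f \<in> cfun S" for f c
  proof -
    have "phi (tietze_ext S (\<lambda>t. c * f t)) = phi (\<lambda>t. c * tietze_ext S f t)"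
      using that by (intro agree cfun_scale ext(1)) (simp_all add: ext_eq cfun_scale)
    then show ?thesis using that cdual_scale[OF phi ext(1)] by (simp add: pushforward_def cfun_scale)
  qed
  have outside: "pushforward S phi f = 0" if "f \<notin> cfun S" for f
    using that by (simp add: pushforward_def)
  note cdual = cdualI[OF compact_closed_in_compact_UNIV[OF cK assms(2)] dnorm_nonneg[OF phi cK] _ _ bound]
  show "pushforward S phi \<in> cdual S" "dnorm S (pushforward S phi) \<le> dnorm UNIV phi"
    by (rule cdual; simp add: add scale outside)+
  show "pushforward S phi (restrict_zero S f) = phi f" if "f \<in> cfun UNIV" for f
    using that cfun_restrict_zero[OF that]
    by (simp add: pushforward_def) (intro agree ext(1); simp add: ext_eq restrict_zero_def)
qed

lemma U_embeddingD:
  assumes "U_embedding S T"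
  shows "T x \<in> cfun S" "T (x + y) k = T x k + T y k" "T (c *\<^sub>R x) k = c * T x k"
    "supn S (T x) = norm x" "\<exists>!phi. norm_preserving_ext S T xs phi"
  using assms by (simp_all add: U_embedding_iff)

lemma pullback_norm_preserving_ext:
  fixes T :: "'a::real_normed_vector \<Rightarrow> 'k::t2_space \<Rightarrow> real"
  assumes cK: "compact (UNIV :: 'k::t2_space set)" and "closed S" and U: "U_embedding UNIV T"
    and psi: "norm_preserving_ext S (\<lambda>x. restrict_zero S (T x)) xs psi"
  shows "norm_preserving_ext UNIV T xs (pullback S psi)"
proof -
  have cS: "compact S" by (rule compact_closed_in_compact_UNIV[OF cK assms(2)])
  have "psi \<in> cdual S" using psi by (simp add: norm_preserving_ext_def)
  note pb = pullback_cdual[OF cK cS this]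
  show ?thesis
  proof (rule norm_preserving_extI[OF pb(1) cK U_embeddingD(1,4)[OF U]])
    show "pullback S psi (T x) = blinfun_apply xs x" for x
      using psi U_embeddingD(1)[OF U] by (simp add: pullback_def norm_preserving_ext_def)
    show "dnorm UNIV (pullback S psi) \<le> norm xs"
      using pb(2) psi by (simp add: norm_preserving_ext_def)
  qed
qed

lemma pullback_inject:
  assumes cK: "compact (UNIV :: 'k::t2_space set)" and S: "closed (S :: 'k set)"
    and "psi \<in> cdual S" "psi' \<in> cdual S" "pullback S psi = pullback S psi'"
  shows "psi = psi'"
proof
  fix f
  show "psi f = psi' f"
  proof (cases "f \<in> cfun S")
    case True
    then have "psi f = pullback S psi (tietze_ext S f)" "psi' f = pullback S psi' (tietze_ext S f)"
      using tietze_ext[OF cK S True] by (simp_all add: pullback_def)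
    then show ?thesis using assms(5) by simp
  qed (simp add: cdual_outside[OF assms(3)] cdual_outside[OF assms(4)])
qed

lemma pushforward_norm_preserving_ext:
  fixes T :: "'a::real_normed_vector \<Rightarrow> 'k::t2_space \<Rightarrow> real"
  assumes cK: "compact (UNIV :: 'k set)" and S: "closed S" and U: "U_embedding UNIV T"
    and isometric: "\<And>x. supn S (restrict_zero S (T x)) = norm x"
    and phi: "norm_preserving_ext UNIV T xs phi"
    and supported: "\<forall>g\<in>cfun UNIV. (\<forall>t\<in>S. g t = 0) \<longrightarrow> phi g = 0"
  shows "norm_preserving_ext S (\<lambda>x. restrict_zero S (T x)) xs (pushforward S phi)"
proof -
  have "phi \<in> cdual UNIV" using phi by (simp add: norm_preserving_ext_def)
  note pf = pushforward_cdual[OF cK S this supported]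
  show ?thesis
  proof (rule norm_preserving_extI[OF pf(1) compact_closed_in_compact_UNIV[OF cK S]
        cfun_restrict_zero[OF U_embeddingD(1)[OF U]] isometric])
    show "pushforward S phi (restrict_zero S (T x)) = blinfun_apply xs x" for x
      using pf(3)[OF U_embeddingD(1)[OF U]] phi by (simp add: norm_preserving_ext_def)
    show "dnorm S (pushforward S phi) \<le> norm xs"
      using pf(2) phi by (simp add: norm_preserving_ext_def)
  qed
qed

theorem U_embedding_restrict_zero:
  fixes T :: "'a::real_normed_vector \<Rightarrow> 'k::t2_space \<Rightarrow> real"
  assumes cK: "compact (UNIV :: 'k set)" and S: "closed S" and U: "U_embedding UNIV T"
    and isometric: "\<And>x. supn S (restrict_zero S (T x)) = norm x"
    and supported: "\<And>xs phi. norm_preserving_ext UNIV T xs phi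
      \<Longrightarrow> \<forall>g\<in>cfun UNIV. (\<forall>t\<in>S. g t = 0) \<longrightarrow> phi g = 0"
  shows "U_embedding S (\<lambda>x. restrict_zero S (T x))"
proof -
  let ?TS = "\<lambda>x. restrict_zero S (T x)"
  have "\<exists>!psi. norm_preserving_ext S ?TS xs psi" for xs
  proof -
    obtain phi where phi: "norm_preserving_ext UNIV T xs phi"
      and unique: "\<And>phi'. norm_preserving_ext UNIV T xs phi' \<Longrightarrow> phi' = phi"
      using U_embeddingD(5)[OF U, of xs] by blast
    note pf = pushforward_norm_preserving_ext[OF cK S U isometric phi supported[OF phi]]
    have "psi = pushforward S phi" if psi: "norm_preserving_ext S ?TS xs psi" for psi
    proof (rule pullback_inject[OF cK S])
      show "psi \<in> cdual S" "pushforward S phi \<in> cdual S"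
        using psi pf by (simp_all add: norm_preserving_ext_def)
      show "pullback S psi = pullback S (pushforward S phi)"
        using unique[OF pullback_norm_preserving_ext[OF cK S U psi]]
          unique[OF pullback_norm_preserving_ext[OF cK S U pf]] by simp
    qed
    with pf show ?thesis by blast
  qed
  then show ?thesis
    using cfun_restrict_zero[OF U_embeddingD(1)[OF U]] isometric U_embeddingD(2,3)[OF U]
    by (simp add: U_embedding_iff restrict_zero_def)
qed

section \<open>The U-core\<close>

locale U_embedding_compact =
  fixes T :: "'a::banach \<Rightarrow> 'k::t2_space \<Rightarrow> real"
  assumes compact_UNIV: "compact (UNIV :: 'k set)"
    and U: "U_embedding UNIV T"
begin

lemmas T_cfun = U_embeddingD(1)[OF U] and T_add = U_embeddingD(2)[OF U]
  and T_scale = U_embeddingD(3)[OF U] and T_norm = U_embeddingD(4)[OF U]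

lemma T_cont: "continuous_on UNIV (T x)"
  using T_cfun by (simp add: cfun_UNIV)

lemma abs_T_le: "\<bar>T x k\<bar> \<le> norm x"
  using abs_le_supn[OF compact_UNIV T_cont, of k x] T_norm by simp

lemma bounded_linear_T: "bounded_linear (\<lambda>x. T x k)"
  by (rule bounded_linear_intro[where K=1]) (simp_all add: T_add T_scale abs_T_le)

definition FT :: "'k \<Rightarrow> 'a \<Rightarrow>\<^sub>L real" where
  "FT k = Blinfun (\<lambda>x. T x k)"

lemma FT_apply [simp]: "blinfun_apply (FT k) x = T x k"
  unfolding FT_def using bounded_linear_T by (simp add: bounded_linear_Blinfun_apply)

lemma norm_FT_le_1: "norm (FT k) \<le> 1"
  by (rule norm_blinfun_bound) (simp_all add: abs_T_le)

lemma abs_T_le_norm_FT: "\<bar>T x k\<bar> \<le> norm (FT k) * norm x"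
  using norm_blinfun[of "FT k" x] by simp

lemma closed_norm_FT_le: "closed {k. norm (FT k) \<le> c}"
proof (cases "0 \<le> c")
  case True
  have "{k. norm (FT k) \<le> c} = (\<Inter>x. {k. \<bar>T x k\<bar> \<le> c * norm x})"
  proof (intro set_eqI iffI)
    fix k assume "k \<in> {k. norm (FT k) \<le> c}"
    then show "k \<in> (\<Inter>x. {k. \<bar>T x k\<bar> \<le> c * norm x})"
      using order_trans[OF abs_T_le_norm_FT mult_right_mono[OF _ norm_ge_zero]] by blast
  next
    fix k assume "k \<in> (\<Inter>x. {k. \<bar>T x k\<bar> \<le> c * norm x})"
    then show "k \<in> {k. norm (FT k) \<le> c}" using True by (auto intro!: norm_blinfun_bound)
  qed
  moreover have "closed {k. \<bar>T x k\<bar> \<le> c * norm x}" for x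
    by (intro closed_Collect_le continuous_intros T_cont)
  ultimately show ?thesis by auto
next
  case False
  have "c < norm (FT k)" for k using False norm_ge_zero[of "FT k"] by linarith
  then have "{k. norm (FT k) \<le> c} = {}" by (auto simp: not_le)
  then show ?thesis by simp
qed

lemma norm_preserving_ext_unique:
  "norm_preserving_ext UNIV T xs p \<Longrightarrow> norm_preserving_ext UNIV T xs q \<Longrightarrow> p = q"
  using U_embeddingD(5)[OF U, of xs] by blast

lemma point_eval_norm_preserving_ext:
  assumes "norm (FT k) = 1"
  shows "norm_preserving_ext UNIV T (FT k) (point_eval k)"
  using point_eval_cdual[OF compact_UNIV, of k] assms T_cfun
  by (intro norm_preserving_extI[OF _ compact_UNIV T_cfun T_norm]) (simp_all add: point_eval_def)

lemma FT_extreme_point: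
  assumes norm1: "norm (FT k) = 1"
  shows "FT k extreme_point_of cball 0 1"
  unfolding extreme_point_of_def
proof (intro conjI ballI)
  show "FT k \<in> cball 0 1" using norm1 by simp
  fix a b :: "'a \<Rightarrow>\<^sub>L real"
  assume a: "a \<in> cball 0 1" and b: "b \<in> cball 0 1"
  show "FT k \<notin> open_segment a b"
  proof
    assume "FT k \<in> open_segment a b"
    then obtain u where "a \<noteq> b" and u: "0 < u" "u < 1" and FT: "FT k = (1 - u) *\<^sub>R a + u *\<^sub>R b"
      by (auto simp: in_segment)
    obtain pa pb where pa: "norm_preserving_ext UNIV T a pa" and pb: "norm_preserving_ext UNIV T b pb"
      using U_embeddingD(5)[OF U] by metis
    then have cdual: "pa \<in> cdual UNIV" "dnorm UNIV pa \<le> 1" "pb \<in> cdual UNIV" "dnorm UNIV pb \<le> 1"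
      using a b by (auto simp: norm_preserving_ext_def)
    let ?phi = "\<lambda>f. (1 - u) * pa f + u * pb f"
    note comb =
      cdual_convex_combination[OF compact_UNIV cdual(1,3) less_imp_le[OF u(1)] less_imp_le[OF u(2)]]
    have "(1 - u) * dnorm UNIV pa + u * dnorm UNIV pb \<le> (1 - u) * 1 + u * 1"
      using cdual(2,4) u by (intro add_mono mult_left_mono) auto
    then have "dnorm UNIV ?phi \<le> 1" using comb(2) by simp
    moreover have "?phi (T x) = blinfun_apply (FT k) x" for x
      using pa pb by (simp add: FT norm_preserving_ext_def blinfun.add_left blinfun.scaleR_left)
    ultimately have "norm_preserving_ext UNIV T (FT k) ?phi"
      using comb(1) u norm1 by (intro norm_preserving_extI[OF _ compact_UNIV T_cfun T_norm]) auto
    then have "?phi = point_eval k"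
      by (rule norm_preserving_ext_unique[OF _ point_eval_norm_preserving_ext[OF norm1]])
    then have combination: "(1 - u) * pa f + u * pb f = f k" if "f \<in> cfun UNIV" for f
      using that fun_cong[of ?phi "point_eval k" f] by (simp add: point_eval_def)
    have "pa (T x) = T x k" "pb (T x) = T x k" for x
      using point_eval_extreme_in_dual_ball[OF compact_UNIV cdual u combination T_cfun]
        point_eval_extreme_in_dual_ball[OF compact_UNIV cdual(3,4,1,2), of "1 - u" k, OF _ _ _ T_cfun]
        combination u by (simp_all add: algebra_simps)
    then have "a = FT k" "b = FT k"
      using pa pb by (auto intro!: blinfun_eqI simp: norm_preserving_ext_def)
    then show False using \<open>a \<noteq> b\<close> by simp
  qed
qed

definition ucore :: "'k set" where
  "ucore = {k. \<exists>F :: 'a \<Rightarrow>\<^sub>L real. (\<forall>x. blinfun_apply F x = T x k) \<and> F extreme_point_of (cball 0 1)}"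

lemma in_ucore_if_norm_FT_eq_1: "norm (FT k) = 1 \<Longrightarrow> k \<in> ucore"
  unfolding ucore_def using FT_extreme_point by force

lemma norm_FT_less_1: "k \<notin> closure ucore \<Longrightarrow> norm (FT k) < 1"
  using in_ucore_if_norm_FT_eq_1 norm_FT_le_1[of k] closure_subset by fastforce

lemma supn_restrict_zero_ucore: "supn (closure ucore) (restrict_zero (closure ucore) (T x)) = norm x"
proof (rule antisym)
  show "supn (closure ucore) (restrict_zero (closure ucore) (T x)) \<le> norm x"
    by (rule supn_le) (simp_all add: restrict_zero_def abs_T_le)
  have compact: "compact (closure ucore)"
    by (rule compact_closed_in_compact_UNIV[OF compact_UNIV closed_closure])
  note cont = cfunD(1)[OF cfun_restrict_zero[OF T_cfun]]
  show "norm x \<le> supn (closure ucore) (restrict_zero (closure ucore) (T x))"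
  proof (cases "x = 0")
    case False
    obtain k where k: "\<bar>T x k\<bar> = norm x"
      using supn_attained[OF compact_UNIV _ T_cont, of x] T_norm by auto
    then have "1 \<le> norm (FT k)" using abs_T_le_norm_FT[of x k] False by simp
    then have "k \<in> closure ucore"
      using in_ucore_if_norm_FT_eq_1 norm_FT_le_1[of k] closure_subset by fastforce
    then have "\<bar>restrict_zero (closure ucore) (T x) k\<bar>
        \<le> supn (closure ucore) (restrict_zero (closure ucore) (T x))"
      by (rule abs_le_supn[OF compact cont])
    with k \<open>k \<in> closure ucore\<close> show ?thesis by (simp add: restrict_zero_def)
  qed (simp add: supn_nonneg[OF compact cont])
qed

lemma finite_cover_off_closure_ucore:
  assumes "closed Q" "Q \<inter> closure ucore = {}"
    and F: "\<And>m. F m \<in> cfun UNIV" "\<And>m t. norm (FT t) \<le> 1 - 1 / Suc m \<Longrightarrow> F m t = 1"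
  obtains I where "finite I" "Q \<subseteq> (\<Union>m\<in>I. {t. 1/2 < F m t})"
proof -
  have cover: "Q \<subseteq> (\<Union>m. {t. 1/2 < F m t})"
  proof
    fix t assume "t \<in> Q"
    then have "0 < 1 - norm (FT t)" using assms(2) norm_FT_less_1 by auto
    then obtain m where "inverse (real (Suc m)) < 1 - norm (FT t)" using reals_Archimedean by blast
    then have "F m t = 1" by (intro F(2)) (simp add: inverse_eq_divide)
    then show "t \<in> (\<Union>m. {t. 1/2 < F m t})" by (intro UN_I[of m]) auto
  qed
  have "open {t. 1/2 < F m t}" for m
    by (rule open_Collect_less[OF continuous_on_const cfunD(1)[OF F(1)]])
  then obtain I where "I \<subseteq> UNIV" "finite I" "Q \<subseteq> (\<Union>m\<in>I. {t. 1/2 < F m t})"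
    by (rule compactE_image[OF compact_closed_in_compact_UNIV[OF compact_UNIV assms(1)] _ cover])
  then show ?thesis using that by blast
qed

context
  fixes xs :: "'a \<Rightarrow>\<^sub>L real" and phi :: "('k \<Rightarrow> real) \<Rightarrow> real"
  assumes ext: "norm_preserving_ext UNIV T xs phi"
begin

lemma ext_cdual: "phi \<in> cdual UNIV" and ext_T: "phi (T x) = blinfun_apply xs x"
  and ext_dnorm: "dnorm UNIV phi = norm xs"
  using ext by (simp_all add: norm_preserving_ext_def)

lemma variation_le_where_T_small:
  assumes x0: "norm x0 \<le> 1" "norm xs - d < blinfun_apply xs x0"
    and f: "f \<in> cfun UNIV" "\<And>t. 0 \<le> f t \<and> f t \<le> 1" "\<And>t. f t \<noteq> 0 \<Longrightarrow> \<bar>T x0 t\<bar> \<le> c"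
    and "0 \<le> c"
  shows "(1 - c) * variation phi f \<le> 2 * d"
proof -
  have "blinfun_apply xs x0 \<le> norm xs * norm x0" using norm_blinfun[of xs x0] by simp
  also have "\<dots> \<le> norm xs" using x0(1) by (simp add: mult_left_le)
  finally have "0 < d" using x0(2) by simp
  obtain h where h: "h \<in> cfun UNIV" "\<And>t. \<bar>h t\<bar> \<le> f t" "variation phi f - d < phi h"
    using variation_approx[OF compact_UNIV ext_cdual f(1) _ \<open>0 < d\<close>] f(2) by blast
  define fT where "fT = (\<lambda>t. f t * T x0 t)"
  have fT: "fT \<in> cfun UNIV"
    using f(1) T_cont unfolding fT_def cfun_UNIV by (auto intro!: continuous_intros)
  have "\<bar>fT t\<bar> \<le> c * f t" for t
    using f(2,3)[of t] by (cases "f t = 0") (auto simp: fT_def abs_mult mult.commute mult_left_mono)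
  then have "\<bar>phi fT\<bar> \<le> variation phi (\<lambda>t. c * f t)"
    by (intro abs_le_variation[OF compact_UNIV ext_cdual] cfun_scale f(1) fT)
  also have "\<dots> \<le> c * variation phi f"
    using f(2) by (intro variation_scale_le[OF compact_UNIV ext_cdual \<open>0 \<le> c\<close> f(1)]) auto
  finally have phi_fT: "phi fT \<le> c * variation phi f" by simp
  (* h almost realises variation phi f where f lives, T x0 almost norms xs elsewhere *)
  define H where "H = (\<lambda>t. h t + (T x0 t - fT t))"
  have H: "H \<in> cfun UNIV" unfolding H_def by (intro cfun_add cfun_diff h(1) T_cfun fT)
  have "\<bar>H t\<bar> \<le> 1" for t
  proof -
    have "H t = h t + (1 - f t) * T x0 t" by (simp add: H_def fT_def algebra_simps)
    then have "\<bar>H t\<bar> \<le> \<bar>h t\<bar> + (1 - f t) * \<bar>T x0 t\<bar>"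
      using f(2)[of t] abs_triangle_ineq[of "h t" "(1 - f t) * T x0 t"] by (simp add: abs_mult)
    also have "\<dots> \<le> f t + (1 - f t) * 1"
      using h(2)[of t] f(2)[of t] abs_T_le[of x0 t] x0(1) by (intro add_mono mult_left_mono) auto
    finally show ?thesis by simp
  qed
  then have "supn UNIV H \<le> 1" by (intro supn_le) auto
  then have "norm xs * supn UNIV H \<le> norm xs" by (simp add: mult_left_le)
  then have "phi H \<le> norm xs"
    using abs_cdual_le[OF ext_cdual compact_UNIV H, unfolded ext_dnorm] abs_ge_self[of "phi H"]
    by linarith
  moreover have "phi H = phi h + (blinfun_apply xs x0 - phi fT)"
    using cdual_add[OF ext_cdual h(1) cfun_diff[OF T_cfun fT]] cdual_diff[OF ext_cdual T_cfun fT]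
    by (simp add: H_def ext_T)
  moreover have "(1 - c) * variation phi f = variation phi f - c * variation phi f"
    by (simp add: algebra_simps)
  ultimately show ?thesis using h(3) x0(2) phi_fT by linarith
qed

lemma exists_Urysohn_small_variation:
  assumes "0 < r" "r \<le> 1" "0 < e"
  shows "\<exists>f. f \<in> cfun UNIV \<and> (\<forall>t. 0 \<le> f t \<and> f t \<le> 1) \<and>
    (\<forall>t. norm (FT t) \<le> 1 - r \<longrightarrow> f t = 1) \<and> variation phi f \<le> e"
proof -
  define d where "d = e * r / 4"
  obtain x0 where x0: "norm x0 \<le> 1" "norm xs - d < blinfun_apply xs x0"
    using exists_almost_norming[of d xs] assms by (auto simp: d_def)
  define c where "c = 1 - r / 2"
  define Y where "Y = {t. c \<le> \<bar>T x0 t\<bar>}"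
  define Z where "Z = {t. norm (FT t) \<le> 1 - r}"
  have cZ: "closed Z" unfolding Z_def by (rule closed_norm_FT_le)
  have cY: "closed Y" unfolding Y_def by (intro closed_Collect_le continuous_intros T_cont)
  have disj: "Z \<inter> Y = {}"
  proof -
    have "\<bar>T x0 t\<bar> < c" if "t \<in> Z" for t
    proof -
      have "\<bar>T x0 t\<bar> \<le> norm (FT t) * 1"
        by (rule order_trans[OF abs_T_le_norm_FT mult_left_mono[OF x0(1) norm_ge_zero]])
      then show ?thesis using that assms(1) by (simp add: Z_def c_def)
    qed
    then show ?thesis by (force simp: Y_def)
  qed
  obtain f :: "'k \<Rightarrow> real" where f: "continuous_on UNIV f" "\<forall>t. 0 \<le> f t \<and> f t \<le> 1"
    "\<forall>t\<in>Z. f t = 1" "\<forall>t\<in>Y. f t = 0"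
    by (rule Urysohn_compact_t2[OF compact_UNIV cZ cY disj])
  have "f t \<noteq> 0 \<Longrightarrow> \<bar>T x0 t\<bar> \<le> c" for t using f(4) by (force simp: Y_def)
  then have "(1 - c) * variation phi f \<le> 2 * d"
    using f(1,2) assms(2) by (intro variation_le_where_T_small[OF x0]) (auto simp: cfun_UNIV c_def)
  then have "variation phi f \<le> e" using assms(1) by (simp add: c_def d_def)
  then show ?thesis using f(1,2,3) by (intro exI[of _ f]) (auto simp: cfun_UNIV Z_def)
qed

lemma exists_Urysohn_sequence:
  assumes "0 < e"
  obtains F where "\<forall>m. F m \<in> cfun UNIV" "\<forall>m t. 0 \<le> F m t \<and> F m t \<le> 1"
    "\<forall>m t. norm (FT t) \<le> 1 - 1 / Suc m \<longrightarrow> F m t = 1" "\<forall>m. variation phi (F m) \<le> e / 2 ^ m"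
proof -
  let ?P = "\<lambda>m f. f \<in> cfun UNIV \<and> (\<forall>t. 0 \<le> f t \<and> f t \<le> 1) \<and>
      (\<forall>t. norm (FT t) \<le> 1 - 1 / Suc m \<longrightarrow> f t = 1) \<and> variation phi f \<le> e / 2 ^ m"
  define F where "F = (\<lambda>m. SOME f. ?P m f)"
  have "?P m (F m)" for m
  proof -
    have "\<exists>f. ?P m f" using assms by (intro exists_Urysohn_small_variation) auto
    then show ?thesis unfolding F_def by (rule someI_ex)
  qed
  then show ?thesis using that[of F] by auto
qed

lemma abs_ext_le_if_vanishing:
  assumes g: "g \<in> cfun UNIV" "\<forall>t\<in>closure ucore. g t = 0" and "0 < e"
  shows "\<bar>phi g\<bar> \<le> (4 * supn UNIV g + norm xs) * e"
proof -
  define M where "M = supn UNIV g"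
  have M: "0 \<le> M" unfolding M_def by (rule supn_nonneg[OF compact_UNIV cfunD(1)[OF g(1)]])
  obtain F where "\<forall>m. F m \<in> cfun UNIV" "\<forall>m t. 0 \<le> F m t \<and> F m t \<le> 1"
    "\<forall>m t. norm (FT t) \<le> 1 - 1 / Suc m \<longrightarrow> F m t = 1" "\<forall>m. variation phi (F m) \<le> e / 2 ^ m"
    by (rule exists_Urysohn_sequence[OF \<open>0 < e\<close>])
  note F = this[rule_format]
  have "closed {t. e \<le> \<bar>g t\<bar>}"
    by (rule closed_Collect_le[OF continuous_on_const continuous_on_rabs[OF cfunD(1)[OF g(1)]]])
  moreover have "{t. e \<le> \<bar>g t\<bar>} \<inter> closure ucore = {}" using g(2) \<open>0 < e\<close> by auto
  ultimately obtain I where I: "finite I" "{t. e \<le> \<bar>g t\<bar>} \<subseteq> (\<Union>m\<in>I. {t. 1/2 < F m t})"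
    using F(1,3) by (rule finite_cover_off_closure_ucore)
  have "\<bar>phi g\<bar> \<le> (\<Sum>m\<in>I. variation phi (\<lambda>t. 2 * M * F m t)) + dnorm UNIV phi * e"
    unfolding M_def using I(2) F(2) \<open>0 < e\<close>
    by (intro abs_le_sum_variation_cover[OF compact_UNIV ext_cdual g(1) I(1) F(1)]) auto
  also have "(\<Sum>m\<in>I. variation phi (\<lambda>t. 2 * M * F m t)) \<le> (\<Sum>m\<in>I. 2 * M * e * (1/2) ^ m)"
  proof (rule sum_mono)
    fix m
    have "variation phi (\<lambda>t. 2 * M * F m t) \<le> 2 * M * variation phi (F m)"
      using M F(2) by (intro variation_scale_le[OF compact_UNIV ext_cdual _ F(1)]) auto
    also have "\<dots> \<le> 2 * M * (e / 2 ^ m)" using M F(4) by (intro mult_left_mono) auto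
    finally show "variation phi (\<lambda>t. 2 * M * F m t) \<le> 2 * M * e * (1/2) ^ m"
      by (simp add: power_one_over)
  qed
  also have "\<dots> = 2 * M * e * (\<Sum>m\<in>I. (1/2) ^ m)" by (simp add: sum_distrib_left)
  also have "\<dots> \<le> 2 * M * e * 2"
    using sum_power_half_le[OF I(1)] M \<open>0 < e\<close> by (intro mult_left_mono) auto
  finally show ?thesis by (simp add: ext_dnorm M_def algebra_simps)
qed

lemma ext_vanishes_off_closure_ucore:
  assumes "g \<in> cfun UNIV" "\<forall>t\<in>closure ucore. g t = 0"
  shows "phi g = 0"
proof -
  define C where "C = 4 * supn UNIV g + norm xs"
  have C: "0 \<le> C" unfolding C_def using supn_nonneg[OF compact_UNIV cfunD(1)[OF assms(1)]] by simp
  have "\<bar>phi g\<bar> \<le> 0 + \<epsilon>" if "0 < \<epsilon>" for \<epsilon>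
  proof -
    have "0 < \<epsilon> / (C + 1)" using that C by simp
    from abs_ext_le_if_vanishing[OF assms this] have "\<bar>phi g\<bar> \<le> C * (\<epsilon> / (C + 1))"
      unfolding C_def .
    also have "\<dots> \<le> \<epsilon>" using that C by (simp add: field_simps)
    finally show ?thesis by simp
  qed
  then show ?thesis using field_le_epsilon[of "\<bar>phi g\<bar>" 0] by simp
qed

end

theorem U_embedding_closure_ucore:
  "U_embedding (closure ucore) (\<lambda>x. restrict_zero (closure ucore) (T x))"
  using ext_vanishes_off_closure_ucore
  by (intro U_embedding_restrict_zero[OF compact_UNIV closed_closure U supn_restrict_zero_ucore])
    blast

end

theorem proposition7p4:
  fixes T :: "'a::banach \<Rightarrow> 'k::t2_space \<Rightarrow> real"
  assumes "compact (UNIV :: 'k set)"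
    and "U_embedding (UNIV :: 'k set) T"
  defines "A0 \<equiv> {k. \<exists>F :: 'a \<Rightarrow>\<^sub>L real. (\<forall>x. blinfun_apply F x = T x k) \<and> F extreme_point_of (cball 0 1)}"
  shows "U_embedding (closure A0) (\<lambda>x k. if k \<in> closure A0 then T x k else 0)"
proof -
  interpret U_embedding_compact T by (rule U_embedding_compact.intro[OF assms(1,2)])
  have "A0 = ucore" unfolding A0_def ucore_def ..
  then show ?thesis using U_embedding_closure_ucore by (simp add: restrict_zero_def)
qed

end
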